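(* If $S$ is a cyclotomic numerical semigroup, then $S$ is symmetric.
   Context: A numerical semigroup is a submonoid $S$ of $(\mathbb N,+)$ with $\mathbb N\setminus S$ finite; its Frobenius number $\mathrm F(S)$ is the largest integer not in $S$. $S$ is symmetric if $S\cup(\mathrm F(S)-S)=\mathbb Z$, where $\mathrm F(S)-S=\{\mathrm F(S)-s: s\in S\}$. The semigroup polynomial is $\mathrm P_S(x)=(1-x)\sum_{s\in S}x^s$, and $S$ is cyclotomic if $\mathrm P_S$ (a monic integer polynomial) has all its complex roots in the closed unit disc. *)

theory Defs
  imports "HOL-Analysis.Analysis" "HOL-Computational_Algebra.Computational_Algebra"
begin

definition numerical_semigroup :: "nat set \<Rightarrow> bool" where
  "numerical_semigroup S \<longleftrightarrow> 0 \<in> S \<and> (\<forall>a\<in>S. \<forall>b\<in>S. a + b \<in> S) \<and> finite (UNIV - S)"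

definition frobenius :: "nat set \<Rightarrow> int" where
  "frobenius S = Max ({-1} \<union> int ` (UNIV - S))"

definition symmetric_ns :: "nat set \<Rightarrow> bool" where
  "symmetric_ns S \<longleftrightarrow> int ` S \<union> (\<lambda>s. frobenius S - int s) ` S = (UNIV :: int set)"

definition semigroup_poly :: "nat set \<Rightarrow> int poly" where
  "semigroup_poly S = (THE p. fps_of_poly p = (1 - fps_X) * Abs_fps (\<lambda>n. if n \<in> S then 1 else 0))"

definition cyclotomic_ns :: "nat set \<Rightarrow> bool" where
  "cyclotomic_ns S \<longleftrightarrow>
     (\<forall>z::complex. poly (map_poly of_int (semigroup_poly S)) z = 0 \<longrightarrow> norm z \<le> 1)"

end

theory Submission imports Defs begin

text \<open>
  Write \<open>P\<^sub>S(x) = 1 + \<dots> + x\<^sup>F\<^sup>+\<^sup>1\<close>. Its constant term is \<open>1\<close>, so the product of its roots has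
  modulus \<open>1\<close>; if all roots lie in the closed unit disc they therefore lie on the unit circle,
  where \<open>1/z = conj z\<close>. Since \<open>P\<^sub>S\<close> has real coefficients, its root multiset is then closed
  under \<open>z \<mapsto> 1/z\<close> and \<open>P\<^sub>S\<close> is self-reciprocal. The coefficient of \<open>x\<^sup>k\<close> in \<open>P\<^sub>S\<close> is
  \<open>[k \<in> S] - [k - 1 \<in> S]\<close>, and comparing these coefficients with those of \<open>x\<^sup>F\<^sup>+\<^sup>1 P\<^sub>S(1/x)\<close>
  shows by induction on \<open>k\<close> that \<open>k \<in> S \<longleftrightarrow> F - k \<notin> S\<close> for \<open>0 \<le> k \<le> F\<close>, which is symmetry.
\<close>

lemma prod_eq_1_imp_eq_1:
  fixes f :: "'a \<Rightarrow> real"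
  assumes "finite A" and "\<And>i. i \<in> A \<Longrightarrow> 0 \<le> f i \<and> f i \<le> 1"
    and "prod f A = 1" and "i \<in> A"
  shows "f i = 1"
proof (rule ccontr)
  assume "f i \<noteq> 1"
  with assms(2,4) have "f i < 1" by fastforce
  have "prod f A = f i * prod f (A - {i})"
    using assms(1,4) by (simp add: prod.remove)
  also have "\<dots> \<le> f i * 1"
    using assms(2,4) by (intro mult_left_mono prod_le_1) auto
  finally show False using \<open>f i < 1\<close> assms(3) by simp
qed

lemma reflect_poly_eq_self_if_roots_in_unit_disc:
  fixes Q :: "complex poly"
  assumes monic: "lead_coeff Q = 1" and const: "coeff Q 0 = 1"
    and roots: "\<And>z. poly Q z = 0 \<Longrightarrow> norm z \<le> 1"
    and real: "map_poly cnj Q = Q"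
  shows "reflect_poly Q = Q"
proof -
  define n where "n = degree Q"
  obtain r where "smult (lead_coeff Q) (\<Prod>i<degree Q. [:-r i, 1:]) = Q"
    by (rule complex_poly_decompose')
  then have Q: "Q = (\<Prod>i<n. [:-r i, 1:])" using monic n_def by simp
  then have poly_Q: "poly Q x = (\<Prod>i<n. x - r i)" for x by (simp add: poly_prod)
  have prod_neg_r: "(\<Prod>i<n. - r i) = 1"
    using poly_Q[of 0] const poly_0_coeff_0[of Q] by simp
  have "poly Q (r i) = 0" if "i < n" for i
    unfolding poly_Q using that by (auto simp: prod_zero_iff)
  then have "norm (r i) \<le> 1" if "i < n" for i
    using roots that by blast
  moreover have "(\<Prod>i<n. norm (r i)) = 1"
    using arg_cong[OF prod_neg_r, of norm] by (simp only: prod_norm[symmetric] norm_minus_cancel norm_one)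
  ultimately have "norm (r i) = 1" if "i < n" for i
    using prod_eq_1_imp_eq_1[of "{..<n}" "\<lambda>i. norm (r i)" i] that by simp
  then have r_cnj: "r i * cnj (r i) = 1" if "i < n" for i
    using complex_norm_square[of "r i"] that by simp
  have reflect_linear: "reflect_poly [:-a, 1:] = [:1, -a:]" for a :: complex
    by (rule poly_eqI) (auto simp: coeff_reflect_poly coeff_pCons split: nat.split)
  have "poly (reflect_poly Q) x = poly Q x" for x
  proof -
    have "poly (reflect_poly Q) x = (\<Prod>i<n. 1 - r i * x)"
      by (simp add: Q reflect_poly_prod reflect_linear poly_prod mult.commute)
    also have "\<dots> = (\<Prod>i<n. - r i * (x - cnj (r i)))"
      using r_cnj by (intro prod.cong) (auto simp: algebra_simps)
    also have "\<dots> = (\<Prod>i<n. x - cnj (r i))"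
      by (simp only: prod.distrib prod_neg_r mult_1_left)
    also have "\<dots> = cnj (poly Q (cnj x))" by (simp add: poly_Q)
    also have "\<dots> = poly Q x" by (metis poly_map_poly_cnj real)
    finally show ?thesis .
  qed
  then show ?thesis using poly_eq_poly_eq_iff by blast
qed

lemma reflect_int_poly_eq_self_if_roots_in_unit_disc:
  fixes p :: "int poly"
  assumes "lead_coeff p = 1" and "coeff p 0 = 1"
    and "\<And>z::complex. poly (map_poly of_int p) z = 0 \<Longrightarrow> norm z \<le> 1"
  shows "reflect_poly p = p"
proof -
  let ?Q = "map_poly (of_int :: int \<Rightarrow> complex) p"
  have degree_Q: "degree ?Q = degree p" by (simp add: degree_map_poly)
  have coeff_Q: "coeff ?Q k = of_int (coeff p k)" for k by (simp add: coeff_map_poly)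
  have "reflect_poly ?Q = ?Q"
  proof (rule reflect_poly_eq_self_if_roots_in_unit_disc)
    show "map_poly cnj ?Q = ?Q" by (rule poly_eqI) (simp add: coeff_map_poly)
  qed (use assms degree_Q coeff_Q in auto)
  then have reflect_coeff: "coeff (reflect_poly ?Q) k = coeff ?Q k" for k by simp
  have "coeff (reflect_poly p) k = coeff p k" for k
    using reflect_coeff[of k] by (simp add: coeff_reflect_poly degree_Q coeff_Q split: if_splits)
  then show ?thesis by (rule poly_eqI)
qed

lemma mem_if_Max_less:
  assumes "finite (UNIV - S)" and "Max (UNIV - S) < k"
  shows "k \<in> S"
proof (rule ccontr)
  assume "k \<notin> S"
  then have "k \<le> Max (UNIV - S)" using assms(1) by (intro Max_ge) auto
  with assms(2) show False by simp
qed

lemma mem_if_frobenius_less: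
  assumes "finite (UNIV - S)" and "frobenius S < int n"
  shows "n \<in> S"
  using assms Max_ge[of "{-1} \<union> int ` (UNIV - S)" "int n"]
  by (auto simp: frobenius_def)

lemma frobenius_eq_Max:
  assumes "finite (UNIV - S)" and "UNIV - S \<noteq> {}"
  shows "frobenius S = int (Max (UNIV - S))"
  unfolding frobenius_def
proof (rule Max_eqI)
  show "int (Max (UNIV - S)) \<in> {-1} \<union> int ` (UNIV - S)"
    using Max_in[OF assms] by simp
qed (use assms in auto)

lemma symmetric_nsI:
  assumes "finite (UNIV - S)"
    and "\<And>k. int k \<le> frobenius S \<Longrightarrow> k \<in> S \<or> nat (frobenius S - int k) \<in> S"
  shows "symmetric_ns S"
  unfolding symmetric_ns_def
proof (intro set_eqI iffI)
  fix z :: int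
  let ?F = "frobenius S"
  have "-1 \<le> ?F" unfolding frobenius_def using assms(1) by (intro Max_ge) auto
  show "z \<in> int ` S \<union> (\<lambda>s. ?F - int s) ` S"
  proof (cases "z \<le> ?F")
    case False
    then have "nat z \<in> S" using assms(1) by (intro mem_if_frobenius_less) auto
    moreover have "z = int (nat z)" using False \<open>-1 \<le> ?F\<close> by simp
    ultimately show ?thesis by (metis UnI1 imageI)
  next
    case True
    show ?thesis
    proof (cases "0 \<le> z")
      case z_nonneg: True
      then have "nat z \<in> S \<or> nat (?F - z) \<in> S" using assms(2)[of "nat z"] True by simp
      moreover have "z = int (nat z)" "z = ?F - int (nat (?F - z))" using True z_nonneg by auto
      ultimately show ?thesis by (metis UnI1 UnI2 imageI)
    next
      case False
      have "z = ?F - int (nat (?F - z))" and "?F < int (nat (?F - z))"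
        using False True by auto
      then show ?thesis using mem_if_frobenius_less[OF assms(1)] by blast
    qed
  qed
qed simp

lemma coeff_semigroup_poly:
  assumes "finite (UNIV - S)"
  shows "coeff (semigroup_poly S) k = of_bool (k \<in> S) - of_bool (0 < k \<and> k - 1 \<in> S)"
proof -
  define c :: "nat \<Rightarrow> int" where "c k = of_bool (k \<in> S) - of_bool (0 < k \<and> k - 1 \<in> S)" for k
  define N where "N = Max (UNIV - S) + 2"
  define P where "P = Poly (map c [0..<N])"
  have "c k = 0" if "N \<le> k" for k
  proof -
    have "0 < k" "k \<in> S" "k - 1 \<in> S"
      using \<open>N \<le> k\<close> mem_if_Max_less[OF assms] by (auto simp: N_def)
    then show ?thesis by (simp add: c_def)
  qed
  then have coeff_P: "coeff P n = c n" for n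
    by (auto simp: P_def nth_default_def not_less simp del: upt_Suc)
  have fps_P: "fps_of_poly P = (1 - fps_X) * Abs_fps (\<lambda>n. if n \<in> S then 1 else 0)"
    by (rule fps_ext) (simp add: coeff_P c_def left_diff_distrib)
  have "semigroup_poly S = P"
    unfolding semigroup_poly_def
  proof (rule the_equality)
    fix p :: "int poly"
    assume "fps_of_poly p = (1 - fps_X) * Abs_fps (\<lambda>n. if n \<in> S then 1 else 0)"
    with fps_P show "p = P" by (metis fps_of_poly_eq_iff)
  qed (rule fps_P)
  then show ?thesis by (simp add: coeff_P c_def)
qed

lemma degree_semigroup_poly:
  assumes "finite (UNIV - S)" and "UNIV - S \<noteq> {}"
  shows "degree (semigroup_poly S) = Max (UNIV - S) + 1"
proof -
  have "Max (UNIV - S) \<notin> S" using Max_in[OF assms] by simp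
  then show ?thesis using mem_if_Max_less[OF assms(1)]
    by (intro antisym degree_le le_degree) (auto simp: coeff_semigroup_poly[OF assms(1)])
qed

lemma lead_coeff_semigroup_poly:
  assumes "finite (UNIV - S)"
  shows "lead_coeff (semigroup_poly S) = 1"
proof (cases "S = UNIV")
  case True
  have "semigroup_poly S = 1"
    by (rule poly_eqI) (unfold coeff_semigroup_poly[OF assms], simp add: True)
  then show ?thesis by simp
next
  case False
  then have "UNIV - S \<noteq> {}" by auto
  then show ?thesis using assms Max_in[OF assms] mem_if_Max_less[OF assms, of "Max (UNIV - S) + 1"]
    by (simp add: degree_semigroup_poly coeff_semigroup_poly)
qed

lemma palindromic_indicator_difference_imp_symmetric:
  fixes S :: "nat set"
  defines "c \<equiv> \<lambda>k. of_bool (k \<in> S) - of_bool (0 < k \<and> k - 1 \<in> S) :: int"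
  assumes "0 \<in> S" and "m \<notin> S" and palindromic: "\<And>k. k \<le> m + 1 \<Longrightarrow> c k = c (m + 1 - k)"
  shows "k \<le> m \<Longrightarrow> k \<in> S \<longleftrightarrow> m - k \<notin> S"
proof (induction k)
  case 0
  with assms show ?case by simp
next
  case (Suc k)
  then have "k \<in> S \<longleftrightarrow> m - k \<notin> S" and "c (Suc k) = c (m - k)" and "m - k - 1 = m - Suc k"
    using palindromic[of "Suc k"] by auto
  with Suc.prems show ?case by (auto simp: c_def split: if_splits)
qed

lemma symmetric_if_reflect_semigroup_poly_eq:
  assumes "numerical_semigroup S" and reflect: "reflect_poly (semigroup_poly S) = semigroup_poly S"
  shows "symmetric_ns S"
proof (cases "S = UNIV")
  case True
  then have "frobenius S = -1" by (simp add: frobenius_def)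
  then show ?thesis by (intro symmetric_nsI) (auto simp: True)
next
  case False
  let ?m = "Max (UNIV - S)"
  have fin: "finite (UNIV - S)" and "0 \<in> S" and gaps: "UNIV - S \<noteq> {}"
    using assms(1) False by (auto simp: numerical_semigroup_def)
  have "?m \<notin> S" using Max_in[OF fin gaps] by simp
  have "coeff (semigroup_poly S) k = coeff (semigroup_poly S) (?m + 1 - k)"
    if "k \<le> ?m + 1" for k
    using arg_cong[OF reflect, of "\<lambda>p. coeff p k"] that
    by (simp add: coeff_reflect_poly degree_semigroup_poly[OF fin gaps])
  then have palindromic: "k \<in> S \<longleftrightarrow> ?m - k \<notin> S" if "k \<le> ?m" for k
    using palindromic_indicator_difference_imp_symmetric[OF \<open>0 \<in> S\<close> \<open>?m \<notin> S\<close> _ that]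
    unfolding coeff_semigroup_poly[OF fin] by blast
  show ?thesis
  proof (rule symmetric_nsI[OF fin])
    fix k
    assume "int k \<le> frobenius S"
    then have "k \<le> ?m" and "nat (frobenius S - int k) = ?m - k"
      by (simp_all add: frobenius_eq_Max[OF fin gaps])
    then show "k \<in> S \<or> nat (frobenius S - int k) \<in> S" using palindromic[of k] by simp
  qed
qed

theorem theorem1:
  fixes S :: "nat set"
  assumes "numerical_semigroup S" and "cyclotomic_ns S"
  shows "symmetric_ns S"
proof -
  have fin: "finite (UNIV - S)" and "0 \<in> S"
    using assms(1) by (auto simp: numerical_semigroup_def)
  have "reflect_poly (semigroup_poly S) = semigroup_poly S"
  proof (rule reflect_int_poly_eq_self_if_roots_in_unit_disc)
    show "lead_coeff (semigroup_poly S) = 1" using fin by (rule lead_coeff_semigroup_poly)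
    show "coeff (semigroup_poly S) 0 = 1" using fin \<open>0 \<in> S\<close> by (simp add: coeff_semigroup_poly)
  qed (use assms(2) cyclotomic_ns_def in blast)
  with assms(1) show ?thesis by (rule symmetric_if_reflect_semigroup_poly_eq)
qed

end
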